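(* Let $\mathbf{A}\in\mathbb{C}^{n\times n}$ satisfy $\mathbf{A}^{\mathsf{H}}\mathbf{A}=\mathbf{I}$, let $p_{\mathbf{M}}$ be a distribution on sampling matrices $\mathbf{M}\in\{0,1\}^{m\times n}$ (rows are distinct standard basis vectors of $\mathbb{R}^n$) such that $\mathbb{E}_{\mathbf{M}\sim p_{\mathbf{M}}}[\mathbf{M}^{\mathsf{T}}\mathbf{M}]$ has full rank, and let $p_{\mathbf{x}}$ be a distribution on images $\mathbf{x}\in\mathbb{C}^n$. Draw independently $\mathbf{x}\sim p_{\mathbf{x}}$, $\mathbf{M}\sim p_{\mathbf{M}}$, $\mathbf{M}'\sim p_{\mathbf{M}}$, $\mathbf{e}\sim\mathcal{N}(0,\sigma^2\mathbf{I})$, $\mathbf{e}'\sim\mathcal{N}(0,\sigma^2\mathbf{I})$ (noise in $\mathbb{C}^m$), and set $\mathbf{y}=\mathbf{M}\mathbf{A}\mathbf{x}+\mathbf{e}$, $\mathbf{y}'=\mathbf{M}'\mathbf{A}\mathbf{x}+\mathbf{e}'$. Let $\mathsf{T}_{\boldsymbol{\theta}}(\cdot,\mathbf{y})$ be an operator on $\mathbb{C}^n$ with trainable parameters $\boldsymbol{\theta}$, and let $\bar{\mathbf{x}}=\bar{\mathbf{x}}(\boldsymbol{\theta},\mathbf{y})$ denote its fixed point, $\bar{\mathbf{x}}=\mathsf{T}_{\boldsymbol{\theta}}(\bar{\mathbf{x}},\mathbf{y})$. Define $\overline{\mathbf{W}}=\mathrm{diag}(\overline{w_1},\dots,\overline{w_n})$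 with $\overline{w_k}=(\mathbb{E}[\mathbf{M}'^{\mathsf{T}}\mathbf{M}']_{k,k})^{-1/2}$ if this diagonal entry is nonzero and $\overline{w_k}=0$ otherwise, and $\mathbf{W}=\mathbf{M}'\overline{\mathbf{W}}(\mathbf{M}'\overline{\mathbf{W}})^{\mathsf{T}}\in\mathbb{R}^{m\times m}$. Consider the supervised loss $\ell_{\mathsf{sup}}(\boldsymbol{\theta})=\mathbb{E}\big[\tfrac12\|\bar{\mathbf{x}}-\mathbf{x}\|_2^2\big]$ and the weighted self-supervised loss $\ell_{\mathsf{self}}(\boldsymbol{\theta})=\mathbb{E}\big[\tfrac12\|\mathbf{M}'\mathbf{A}\bar{\mathbf{x}}-\mathbf{y}'\|_{\mathbf{W}}^2\big]$, where $\|\mathbf{v}\|_{\mathbf{W}}^2=\mathbf{v}^{\mathsf{H}}\mathbf{W}\mathbf{v}$. Then their Jacobian-free backpropagation updates coincide: $$\mathsf{JFB}_{\ell_{\mathsf{self}}}(\boldsymbol{\theta})=\mathsf{JFB}_{\ell_{\mathsf{sup}}}(\boldsymbol{\theta}),$$ i.e. $$\mathrm{Real}\Big(\mathbb{E}\big[(\nabla_{\boldsymbol{\theta}}\mathsf{T}_{\boldsymbol{\theta}}(\bar{\mathbf{x}}))^{\mathsf{H}}(\mathbf{M}'\mathbf{A})^{\mathsf{H}}\mathbf{W}(\mathbf{M}'\mathbf{A}\bar{\mathbf{x}}-\mathbf{y}')\big]\Big)=\mathrm{Real}\Big(\mathbb{E}\big[(\nabla_{\boldsymbol{\theta}}\mathsf{T}_{\boldsymbol{\theta}}(\bar{\mathbf{x}}))^{\mathsf{H}}(\bar{\mathbf{x}}-\mathbf{x})\big]\Big),$$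 where the expectations are over all the random quantities above.
   Context: For a loss $\ell$ depending on $\boldsymbol{\theta}$ through the fixed point $\bar{\mathbf{x}}$, the Jacobian-free backpropagation (JFB) update is $\mathsf{JFB}_{\ell}(\boldsymbol{\theta})=\mathrm{Real}\big((\nabla_{\boldsymbol{\theta}}\mathsf{T}_{\boldsymbol{\theta}}(\bar{\mathbf{x}}))^{\mathsf{H}}[\partial\ell/\partial\bar{\mathbf{x}}]^{\mathsf{T}}\big)$ (with expectation over the data), where $\nabla_{\boldsymbol{\theta}}\mathsf{T}_{\boldsymbol{\theta}}(\bar{\mathbf{x}})$ is the Jacobian of $\mathsf{T}_{\boldsymbol{\theta}}$ with respect to $\boldsymbol{\theta}$ evaluated at the fixed point, and $[\partial\ell/\partial\bar{\mathbf{x}}]^{\mathsf{T}}$ is the gradient of the per-sample loss with respect to $\bar{\mathbf{x}}$ (treating $\bar{\mathbf{x}}$ as a free variable): $\bar{\mathbf{x}}-\mathbf{x}$ for $\ell_{\mathsf{sup}}$ and $(\mathbf{M}'\mathbf{A})^{\mathsf{H}}\mathbf{W}(\mathbf{M}'\mathbf{A}\bar{\mathbf{x}}-\mathbf{y}')$ for $\ell_{\mathsf{self}}$. $\mathbf{A}$ is called "orthogonal" in the paper, meaning $\mathbf{A}^{\mathsf{H}}\mathbf{A}=\mathbf{I}$. $\mathsf{T}_{\boldsymbol{\theta}}$ is deterministic, so $\bar{\mathbf{x}}$ depends only on $(\mathbf{x},\mathbf{M},\mathbf{e})$ given $\boldsymbol{\theta}$. *)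

theory Defs
  imports "HOL-Probability.Probability"
begin

text \<open>Stored with complex entries
  (0 and 1) so that it can be multiplied with complex vectors.\<close>
definition sampling_matrix :: "complex^'n^'m \<Rightarrow> bool" where
  "sampling_matrix M \<longleftrightarrow> (\<forall>i. \<exists>j. M $ i = axis j 1) \<and> inj (\<lambda>i. M $ i)"

definition adjoint_mat :: "complex^'n^'m \<Rightarrow> complex^'m^'n" where
  "adjoint_mat A = (\<chi> i j. cnj (A $ j $ i))"

definition Re_vec :: "complex^'p \<Rightarrow> real^'p" where
  "Re_vec v = (\<chi> i. Re (v $ i))"

text \<open>Jacobian matrix (n x p, complex entries) of a real-linear map from real^p to complex^n
  (the derivative of the operator with respect to the real parameter vector).\<close>
definition jacobian_matrix :: "(real^'p \<Rightarrow> complex^'n) \<Rightarrow> complex^'p^'n" where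
  "jacobian_matrix D = (\<chi> k i. D (axis i 1) $ k)"

text \<open>Circularly-symmetric complex Gaussian N(0, sigma^2) on C: real and imaginary parts
  independent N(0, sigma^2/2).\<close>
definition cgauss :: "real \<Rightarrow> complex measure" where
  "cgauss \<sigma> = distr
     (density lborel (normal_density 0 (\<sigma> / sqrt 2)) \<Otimes>\<^sub>M density lborel (normal_density 0 (\<sigma> / sqrt 2)))
     borel (\<lambda>(a, b). Complex a b)"

definition cgauss_vec :: "real \<Rightarrow> (complex^'m) measure" where
  "cgauss_vec \<sigma> = distr (PiM UNIV (\<lambda>_. cgauss \<sigma>)) borel (\<lambda>f. \<chi> i. f i)"

definition mean_MtM :: "(complex^'n^'m) measure \<Rightarrow> complex^'n^'n" where
  "mean_MtM pM = integral\<^sup>L pM (\<lambda>M. transpose M ** M)"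

definition Wbar :: "(complex^'n^'m) measure \<Rightarrow> complex^'n^'n" where
  "Wbar pM = (\<chi> i j. if i = j then
       (if mean_MtM pM $ i $ i = 0 then 0
        else complex_of_real (Re (mean_MtM pM $ i $ i) powr (-1/2)))
     else 0)"

definition Wmat :: "(complex^'n^'m) measure \<Rightarrow> complex^'n^'m \<Rightarrow> complex^'m^'m" where
  "Wmat pM M' = (M' ** Wbar pM) ** transpose (M' ** Wbar pM)"

end

theory Submission
  imports Defs
begin

text \<open>Write \<open>xbar\<close> for the fixed point and \<open>J\<close> for the parameter Jacobian of the operator there.  Since
  \<open>y' = M' A x + e'\<close>, the weighted residual splits as
  \<open>(M' A)\<^sup>H W (M' A xbar - y') = G(M') (xbar - x) - H(M') e'\<close> with
  \<open>G(M') = (M' A)\<^sup>H W (M' A)\<close> and \<open>H(M') = (M' A)\<^sup>H W\<close>.  For a sampling matrix,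
  \<open>M'\<^sup>T M'\<close> is a diagonal 0/1 projection commuting with the diagonal \<open>Wbar\<close>, so
  \<open>G(M') = A\<^sup>H (M'\<^sup>T M') Wbar\<^sup>2 A\<close>; since \<open>Wbar\<^sup>2\<close> inverts the diagonal matrix
  \<open>E[M'\<^sup>T M']\<close> (invertible by the rank hypothesis), \<open>E[G(M')] = A\<^sup>H A = I\<close>.  The fresh draw
  \<open>(M', e')\<close> is independent of \<open>(x, M, e)\<close>, on which \<open>xbar\<close> and \<open>J\<close> depend, so averaging over it
  first replaces \<open>G(M')\<close> by \<open>I\<close> and \<open>H(M') e'\<close> by \<open>E[H(M')] E[e'] = 0\<close>, leaving the supervised
  residual \<open>xbar - x\<close>.\<close>

section \<open>Products of probability spaces\<close>

lemma pair_measure_assoc: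
  assumes "sigma_finite_measure A" "sigma_finite_measure B" "sigma_finite_measure C"
  shows "distr ((A \<Otimes>\<^sub>M B) \<Otimes>\<^sub>M C) (A \<Otimes>\<^sub>M (B \<Otimes>\<^sub>M C)) (\<lambda>((a, b), c). (a, (b, c)))
    = A \<Otimes>\<^sub>M (B \<Otimes>\<^sub>M C)"
proof (rule pair_measure_eqI[symmetric])
  interpret B: sigma_finite_measure B by fact
  interpret C: sigma_finite_measure C by fact
  interpret BC: pair_sigma_finite B C ..
  show "sigma_finite_measure (B \<Otimes>\<^sub>M C)" ..
  fix S T assume S[measurable]: "S \<in> sets A" and T[measurable]: "T \<in> sets (B \<Otimes>\<^sub>M C)"
  note [measurable] = C.measurable_emeasure_Pair[OF T]
  let ?\<phi> = "\<lambda>((a, b), c). (a, (b, c))"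
  have \<phi>: "?\<phi> \<in> (A \<Otimes>\<^sub>M B) \<Otimes>\<^sub>M C \<rightarrow>\<^sub>M A \<Otimes>\<^sub>M (B \<Otimes>\<^sub>M C)"
    by (simp add: split_beta')
  have eq: "?\<phi> -` (S \<times> T) \<inter> space ((A \<Otimes>\<^sub>M B) \<Otimes>\<^sub>M C) = {p. fst (fst p) \<in> S \<and> (snd (fst p), snd p) \<in> T}"
    using sets.sets_into_space[OF S] sets.sets_into_space[OF T] by (auto simp: space_pair_measure)
  have [measurable]: "{p. fst (fst p) \<in> S \<and> (snd (fst p), snd p) \<in> T} \<in> sets ((A \<Otimes>\<^sub>M B) \<Otimes>\<^sub>M C)"
    unfolding eq[symmetric] using \<phi> by (rule measurable_sets) simp
  from eq have "emeasure (distr ((A \<Otimes>\<^sub>M B) \<Otimes>\<^sub>M C) (A \<Otimes>\<^sub>M (B \<Otimes>\<^sub>M C)) ?\<phi>) (S \<times> T)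
      = emeasure ((A \<Otimes>\<^sub>M B) \<Otimes>\<^sub>M C) {p. fst (fst p) \<in> S \<and> (snd (fst p), snd p) \<in> T}"
    using \<phi> by (subst emeasure_distr) auto
  also have "\<dots> = (\<integral>\<^sup>+ p. indicator S (fst p) * emeasure C (Pair (snd p) -` T) \<partial>(A \<Otimes>\<^sub>M B))"
    by (subst C.emeasure_pair_measure_alt) (auto intro!: nn_integral_cong simp: vimage_def indicator_def)
  also have "\<dots> = (\<integral>\<^sup>+ a. indicator S a * (\<integral>\<^sup>+ b. emeasure C (Pair b -` T) \<partial>B) \<partial>A)"
    by (subst B.nn_integral_fst[symmetric]) (auto simp: nn_integral_cmult)
  also have "\<dots> = emeasure A S * emeasure (B \<Otimes>\<^sub>M C) T"
    by (simp add: C.emeasure_pair_measure_alt nn_integral_multc)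
  finally show "emeasure A S * emeasure (B \<Otimes>\<^sub>M C) T
      = emeasure (distr ((A \<Otimes>\<^sub>M B) \<Otimes>\<^sub>M C) (A \<Otimes>\<^sub>M (B \<Otimes>\<^sub>M C)) ?\<phi>) (S \<times> T)" ..
qed (use assms in simp_all)

lemma pair_measure_left_commute:
  assumes "sigma_finite_measure A" "sigma_finite_measure B" "sigma_finite_measure C"
  shows "distr (B \<Otimes>\<^sub>M (A \<Otimes>\<^sub>M C)) (A \<Otimes>\<^sub>M (B \<Otimes>\<^sub>M C)) (\<lambda>(b, (a, c)). (a, (b, c)))
    = A \<Otimes>\<^sub>M (B \<Otimes>\<^sub>M C)"
proof (rule pair_measure_eqI[symmetric])
  interpret B: sigma_finite_measure B by fact
  interpret C: sigma_finite_measure C by fact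
  interpret BC: pair_sigma_finite B C ..
  interpret AC: sigma_finite_measure "A \<Otimes>\<^sub>M C"
    by (rule sigma_finite_pair_measure) fact+
  show "sigma_finite_measure (B \<Otimes>\<^sub>M C)" ..
  fix S T assume S[measurable]: "S \<in> sets A" and T[measurable]: "T \<in> sets (B \<Otimes>\<^sub>M C)"
  note [measurable] = C.measurable_emeasure_Pair[OF T]
  let ?\<phi> = "\<lambda>(b, (a, c)). (a, (b, c))"
  have \<phi>: "?\<phi> \<in> B \<Otimes>\<^sub>M (A \<Otimes>\<^sub>M C) \<rightarrow>\<^sub>M A \<Otimes>\<^sub>M (B \<Otimes>\<^sub>M C)"
    by (simp add: split_beta')
  have eq: "?\<phi> -` (S \<times> T) \<inter> space (B \<Otimes>\<^sub>M (A \<Otimes>\<^sub>M C)) = {p. fst (snd p) \<in> S \<and> (fst p, snd (snd p)) \<in> T}"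
    using sets.sets_into_space[OF S] sets.sets_into_space[OF T] by (auto simp: space_pair_measure)
  have [measurable]: "{p. fst (snd p) \<in> S \<and> (fst p, snd (snd p)) \<in> T} \<in> sets (B \<Otimes>\<^sub>M (A \<Otimes>\<^sub>M C))"
    unfolding eq[symmetric] using \<phi> by (rule measurable_sets) simp
  from eq have "emeasure (distr (B \<Otimes>\<^sub>M (A \<Otimes>\<^sub>M C)) (A \<Otimes>\<^sub>M (B \<Otimes>\<^sub>M C)) ?\<phi>) (S \<times> T)
      = emeasure (B \<Otimes>\<^sub>M (A \<Otimes>\<^sub>M C)) {p. fst (snd p) \<in> S \<and> (fst p, snd (snd p)) \<in> T}"
    using \<phi> by (subst emeasure_distr) auto
  also have "\<dots> = (\<integral>\<^sup>+ b. emeasure (A \<Otimes>\<^sub>M C) (S \<times> Pair b -` T) \<partial>B)"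
    by (subst AC.emeasure_pair_measure_alt) (auto intro!: nn_integral_cong arg_cong2[where f=emeasure])
  also have "\<dots> = (\<integral>\<^sup>+ b. emeasure A S * emeasure C (Pair b -` T) \<partial>B)"
    by (intro nn_integral_cong C.emeasure_pair_measure_Times) auto
  also have "\<dots> = emeasure A S * emeasure (B \<Otimes>\<^sub>M C) T"
    by (simp add: C.emeasure_pair_measure_alt nn_integral_cmult)
  finally show "emeasure A S * emeasure (B \<Otimes>\<^sub>M C) T
      = emeasure (distr (B \<Otimes>\<^sub>M (A \<Otimes>\<^sub>M C)) (A \<Otimes>\<^sub>M (B \<Otimes>\<^sub>M C)) ?\<phi>) (S \<times> T)" ..
qed (use assms in simp_all)

lemma pair_measure_distr_right:
  assumes "sigma_finite_measure M" "sigma_finite_measure N" and g: "g \<in> N' \<rightarrow>\<^sub>M N" "N = distr N' N g"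
  shows "M \<Otimes>\<^sub>M N = distr (M \<Otimes>\<^sub>M N') (M \<Otimes>\<^sub>M N) (\<lambda>(x, y). (x, g y))"
  using pair_measure_distr[of "\<lambda>x. x" M M g N' N] assms by simp

lemma pair_measure_regroup:
  assumes "sigma_finite_measure M1" "sigma_finite_measure M2" "sigma_finite_measure M3"
    and "sigma_finite_measure M4" "sigma_finite_measure M5"
  shows "M1 \<Otimes>\<^sub>M (M2 \<Otimes>\<^sub>M (M3 \<Otimes>\<^sub>M (M4 \<Otimes>\<^sub>M M5)))
    = distr ((M1 \<Otimes>\<^sub>M (M2 \<Otimes>\<^sub>M M4)) \<Otimes>\<^sub>M (M3 \<Otimes>\<^sub>M M5)) (M1 \<Otimes>\<^sub>M (M2 \<Otimes>\<^sub>M (M3 \<Otimes>\<^sub>M (M4 \<Otimes>\<^sub>M M5))))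
        (\<lambda>((x, y, u), (z, w)). (x, y, z, u, w))"
proof -
  note sf = assms sigma_finite_pair_measure
  let ?S = "M3 \<Otimes>\<^sub>M M5"
  have lc: "M3 \<Otimes>\<^sub>M (M4 \<Otimes>\<^sub>M M5)
      = distr (M4 \<Otimes>\<^sub>M ?S) (M3 \<Otimes>\<^sub>M (M4 \<Otimes>\<^sub>M M5)) (\<lambda>(u, z, w). (z, u, w))"
    by (rule pair_measure_left_commute[symmetric]) (rule assms)+
  have "M2 \<Otimes>\<^sub>M (M3 \<Otimes>\<^sub>M (M4 \<Otimes>\<^sub>M M5))
      = distr (M2 \<Otimes>\<^sub>M (M4 \<Otimes>\<^sub>M ?S)) (M2 \<Otimes>\<^sub>M (M3 \<Otimes>\<^sub>M (M4 \<Otimes>\<^sub>M M5)))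
          (\<lambda>(y, p). (y, (\<lambda>(u, z, w). (z, u, w)) p))"
    by (rule pair_measure_distr_right[OF _ _ _ lc]) (simp_all add: sf split_beta')
  also have "\<dots> = distr ((M2 \<Otimes>\<^sub>M M4) \<Otimes>\<^sub>M ?S) (M2 \<Otimes>\<^sub>M (M3 \<Otimes>\<^sub>M (M4 \<Otimes>\<^sub>M M5)))
      (\<lambda>((y, u), (z, w)). (y, z, u, w))"
    by (subst pair_measure_assoc[symmetric, of M2 M4 ?S])
       (simp_all add: sf distr_distr comp_def split_beta')
  finally have inner: "M2 \<Otimes>\<^sub>M (M3 \<Otimes>\<^sub>M (M4 \<Otimes>\<^sub>M M5)) = \<dots>" .
  have "M1 \<Otimes>\<^sub>M (M2 \<Otimes>\<^sub>M (M3 \<Otimes>\<^sub>M (M4 \<Otimes>\<^sub>M M5)))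
      = distr (M1 \<Otimes>\<^sub>M ((M2 \<Otimes>\<^sub>M M4) \<Otimes>\<^sub>M ?S)) (M1 \<Otimes>\<^sub>M (M2 \<Otimes>\<^sub>M (M3 \<Otimes>\<^sub>M (M4 \<Otimes>\<^sub>M M5))))
          (\<lambda>(x, q). (x, (\<lambda>((y, u), (z, w)). (y, z, u, w)) q))"
    by (rule pair_measure_distr_right[OF _ _ _ inner]) (simp_all add: sf split_beta')
  also have "\<dots> = distr ((M1 \<Otimes>\<^sub>M (M2 \<Otimes>\<^sub>M M4)) \<Otimes>\<^sub>M ?S) (M1 \<Otimes>\<^sub>M (M2 \<Otimes>\<^sub>M (M3 \<Otimes>\<^sub>M (M4 \<Otimes>\<^sub>M M5))))
      (\<lambda>((x, y, u), (z, w)). (x, y, z, u, w))"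
    by (subst pair_measure_assoc[symmetric, of M1 "M2 \<Otimes>\<^sub>M M4" ?S])
       (simp_all add: sf distr_distr comp_def split_beta')
  finally show ?thesis .
qed

lemma integral_pair_measure_regroup:
  fixes F :: "'a \<times> 'b \<times> 'c \<times> 'd \<times> 'e \<Rightarrow> 'f::{banach, second_countable_topology}"
  assumes "sigma_finite_measure M1" "sigma_finite_measure M2" "sigma_finite_measure M3"
    and "sigma_finite_measure M4" "sigma_finite_measure M5"
    and F: "F \<in> borel_measurable (M1 \<Otimes>\<^sub>M (M2 \<Otimes>\<^sub>M (M3 \<Otimes>\<^sub>M (M4 \<Otimes>\<^sub>M M5))))"
  shows "integral\<^sup>L (M1 \<Otimes>\<^sub>M (M2 \<Otimes>\<^sub>M (M3 \<Otimes>\<^sub>M (M4 \<Otimes>\<^sub>M M5)))) F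
    = (\<integral>((x, y, u), (z, w)). F (x, y, z, u, w) \<partial>((M1 \<Otimes>\<^sub>M (M2 \<Otimes>\<^sub>M M4)) \<Otimes>\<^sub>M (M3 \<Otimes>\<^sub>M M5)))"
proof -
  let ?\<Omega> = "M1 \<Otimes>\<^sub>M (M2 \<Otimes>\<^sub>M (M3 \<Otimes>\<^sub>M (M4 \<Otimes>\<^sub>M M5)))"
  let ?\<rho> = "\<lambda>((x, y, u), (z, w)). (x, y, z, u, w)"
  have "integral\<^sup>L ?\<Omega> F = integral\<^sup>L (distr ((M1 \<Otimes>\<^sub>M (M2 \<Otimes>\<^sub>M M4)) \<Otimes>\<^sub>M (M3 \<Otimes>\<^sub>M M5)) ?\<Omega> ?\<rho>) F"
    by (rule arg_cong[where f="\<lambda>N. integral\<^sup>L N F", OF pair_measure_regroup[OF assms(1-5)]])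
  also have "\<dots> = (\<integral>p. F (?\<rho> p) \<partial>((M1 \<Otimes>\<^sub>M (M2 \<Otimes>\<^sub>M M4)) \<Otimes>\<^sub>M (M3 \<Otimes>\<^sub>M M5)))"
    by (rule integral_distr[OF _ F]) (simp add: split_beta')
  finally show ?thesis by (simp add: split_beta')
qed

lemma integrable_pair_mult:
  fixes f :: "'a \<Rightarrow> real" and g :: "'b \<Rightarrow> real"
  assumes "pair_sigma_finite M N" "integrable M f" "integrable N g"
  shows "integrable (M \<Otimes>\<^sub>M N) (\<lambda>(a, b). f a * g b)"
proof -
  interpret pair_sigma_finite M N by fact
  have [measurable]: "f \<in> borel_measurable M" "g \<in> borel_measurable N" using assms by auto
  show ?thesis
    by (rule Fubini_integrable) (use assms in \<open>auto simp: abs_mult\<close>)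
qed

lemma integrable_pair_measure_dominated:
  fixes F :: "'a \<times> 'b \<Rightarrow> 'c::{banach, second_countable_topology}"
  assumes "pair_sigma_finite M N" "integrable M f" "integrable N g"
    and "F \<in> borel_measurable (M \<Otimes>\<^sub>M N)" "\<And>a b. norm (F (a, b)) \<le> f a * g b"
  shows "integrable (M \<Otimes>\<^sub>M N) F"
proof (rule Bochner_Integration.integrable_bound[OF integrable_pair_mult[OF assms(1-3)] assms(4)])
  show "AE p in M \<Otimes>\<^sub>M N. norm (F p) \<le> norm ((\<lambda>(a, b). f a * g b) p)"
  proof (rule AE_I2)
    fix p :: "'a \<times> 'b"
    obtain a b where p: "p = (a, b)" by (cases p)
    have "norm (F p) \<le> f a * g b" using assms(5) by (simp add: p)
    also have "\<dots> \<le> norm ((\<lambda>(a, b). f a * g b) p)" by (simp add: p)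
    finally show "norm (F p) \<le> norm ((\<lambda>(a, b). f a * g b) p)" .
  qed
qed

lemma
  fixes f :: "'a \<Rightarrow> 'c::{banach, second_countable_topology}"
  assumes "prob_space N" "integrable M f"
  shows integrable_pair_measure_fst: "integrable (M \<Otimes>\<^sub>M N) (\<lambda>p. f (fst p))"
    and integral_pair_measure_fst: "(\<integral>p. f (fst p) \<partial>(M \<Otimes>\<^sub>M N)) = integral\<^sup>L M f"
proof -
  interpret N: prob_space N by fact
  have [measurable]: "f \<in> borel_measurable M" using assms by auto
  have "integrable (distr (M \<Otimes>\<^sub>M N) M fst) f" "integral\<^sup>L (distr (M \<Otimes>\<^sub>M N) M fst) f = integral\<^sup>L M f"
    using assms by (simp_all add: N.distr_pair_fst)
  then show "integrable (M \<Otimes>\<^sub>M N) (\<lambda>p. f (fst p))" "(\<integral>p. f (fst p) \<partial>(M \<Otimes>\<^sub>M N)) = integral\<^sup>L M f"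
    by (simp_all add: integrable_distr_eq integral_distr)
qed

lemma
  fixes f :: "'b \<Rightarrow> 'c::{banach, second_countable_topology}"
  assumes "prob_space M" "prob_space N" "integrable N f"
  shows integrable_pair_measure_snd: "integrable (M \<Otimes>\<^sub>M N) (\<lambda>p. f (snd p))"
    and integral_pair_measure_snd: "(\<integral>p. f (snd p) \<partial>(M \<Otimes>\<^sub>M N)) = integral\<^sup>L N f"
proof -
  interpret pair_sigma_finite N M
    by (simp add: pair_sigma_finite_def prob_space_imp_sigma_finite assms)
  have [measurable]: "f \<in> borel_measurable N" using assms by auto
  have swap: "integrable (N \<Otimes>\<^sub>M M) (\<lambda>p. f (fst p))"
    using assms by (simp add: integrable_pair_measure_fst)
  from integrable_product_swap[OF swap]
  show "integrable (M \<Otimes>\<^sub>M N) (\<lambda>p. f (snd p))" by (simp add: split_beta')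
  have "(\<integral>p. f (snd p) \<partial>(M \<Otimes>\<^sub>M N)) = (\<integral>(x, y). (\<lambda>p. f (fst p)) (y, x) \<partial>(M \<Otimes>\<^sub>M N))"
    by (simp add: split_beta')
  also have "\<dots> = (\<integral>p. f (fst p) \<partial>(N \<Otimes>\<^sub>M M))"
    by (rule integral_product_swap) measurable
  also have "\<dots> = integral\<^sup>L N f"
    using assms by (simp add: integral_pair_measure_fst)
  finally show "(\<integral>p. f (snd p) \<partial>(M \<Otimes>\<^sub>M N)) = integral\<^sup>L N f" .
qed

lemma integral_pair_measure_bounded_linear:
  fixes g :: "'b \<Rightarrow> 'c::{banach, second_countable_topology}"
    and T :: "'a \<Rightarrow> 'c \<Rightarrow> 'd::{banach, second_countable_topology}"
  assumes "pair_sigma_finite M N" "integrable (M \<Otimes>\<^sub>M N) (\<lambda>(a, b). T a (g b))"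
    and "\<And>a. bounded_linear (T a)" "integrable N g"
  shows "(\<integral>(a, b). T a (g b) \<partial>(M \<Otimes>\<^sub>M N)) = (\<integral>a. T a (integral\<^sup>L N g) \<partial>M)"
proof -
  interpret pair_sigma_finite M N by fact
  show ?thesis
    using integral_fst'[OF assms(2)] integral_bounded_linear[OF assms(3,4)] by simp
qed

lemma (in finite_measure) integrable_AE_in_finite_set:
  fixes f :: "'a \<Rightarrow> 'b::{banach, second_countable_topology}"
  assumes "finite S" "AE x in M. x \<in> S" "f \<in> borel_measurable M"
  shows "integrable M f"
proof (rule integrable_const_bound[OF _ assms(3)])
  show "AE x in M. norm (f x) \<le> Max (norm ` f ` S)"
    using assms(2) by eventually_elim (use assms(1) in \<open>auto intro!: Max_ge\<close>)
qed

section \<open>Complex matrices\<close>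

lemma borel_measurable_vec_nth[measurable (raw)]:
  assumes "f \<in> borel_measurable N"
  shows "(\<lambda>w. (f w :: 'a::topological_space^'n) $ i) \<in> borel_measurable N"
proof (rule measurable_compose[OF assms borel_measurable_continuous_onI])
  show "continuous_on UNIV (\<lambda>v::'a^'n. v $ i)" by (intro continuous_intros)
qed

lemma borel_measurable_matrix_vector_mult[measurable (raw)]:
  fixes f :: "'x \<Rightarrow> complex^'n^'m" and g :: "'x \<Rightarrow> complex^'n"
  assumes "f \<in> borel_measurable N" "g \<in> borel_measurable N"
  shows "(\<lambda>w. f w *v g w) \<in> borel_measurable N"
proof (rule borel_measurable_continuous_Pair[OF assms])
  show "continuous_on UNIV (\<lambda>p::(complex^'n^'m) \<times> (complex^'n). fst p *v snd p)"
    unfolding matrix_vector_mult_def by (intro continuous_intros)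
qed

lemma borel_measurable_matrix_matrix_mult[measurable (raw)]:
  fixes f :: "'x \<Rightarrow> complex^'n^'m" and g :: "'x \<Rightarrow> complex^'k^'n"
  assumes "f \<in> borel_measurable N" "g \<in> borel_measurable N"
  shows "(\<lambda>w. f w ** g w) \<in> borel_measurable N"
proof (rule borel_measurable_continuous_Pair[OF assms])
  show "continuous_on UNIV (\<lambda>p::(complex^'n^'m) \<times> (complex^'k^'n). fst p ** snd p)"
    unfolding matrix_matrix_mult_def by (intro continuous_intros)
qed

lemma borel_measurable_adjoint_mat[measurable (raw)]:
  assumes "f \<in> borel_measurable N"
  shows "(\<lambda>w. adjoint_mat (f w :: complex^'n^'m)) \<in> borel_measurable N"
proof (rule measurable_compose[OF assms borel_measurable_continuous_onI])
  show "continuous_on UNIV (adjoint_mat :: complex^'n^'m \<Rightarrow> _)"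
    unfolding adjoint_mat_def by (intro continuous_intros)
qed

lemma borel_measurable_transpose[measurable (raw)]:
  assumes "f \<in> borel_measurable N"
  shows "(\<lambda>w. transpose (f w :: complex^'n^'m)) \<in> borel_measurable N"
proof (rule measurable_compose[OF assms borel_measurable_continuous_onI])
  show "continuous_on UNIV (transpose :: complex^'n^'m \<Rightarrow> _)"
    unfolding transpose_def by (intro continuous_intros)
qed

lemma bounded_linear_matrix_mult_left: "bounded_linear (\<lambda>Z::complex^'n^'m. Z ** B)"
  unfolding linear_conv_bounded_linear[symmetric]
  by (rule linearI) (auto simp: vec_eq_iff matrix_matrix_mult_def sum.distrib algebra_simps scaleR_sum_right)

lemma bounded_linear_matrix_mult_right: "bounded_linear (\<lambda>Z::complex^'n^'m. C ** Z)"
  unfolding linear_conv_bounded_linear[symmetric]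
  by (rule linearI) (auto simp: vec_eq_iff matrix_matrix_mult_def sum.distrib algebra_simps scaleR_sum_right)

lemma bounded_linear_matrix_vector_mult_left: "bounded_linear (\<lambda>Z::complex^'n^'m. Z *v w)"
  unfolding linear_conv_bounded_linear[symmetric]
  by (rule linearI) (auto simp: vec_eq_iff matrix_vector_mult_def sum.distrib algebra_simps scaleR_sum_right)

lemma norm_matrix_vector_mult_le: "norm ((B::complex^'n^'m) *v w) \<le> norm B * norm w"
proof -
  have "norm ((B *v w) $ i) \<le> norm (B $ i) * norm w" for i
  proof -
    have "norm ((B *v w) $ i) \<le> (\<Sum>j\<in>UNIV. norm (B $ i $ j) * norm (w $ j))"
      unfolding matrix_vector_mult_def vec_lambda_beta
      by (rule order_trans[OF norm_sum]) (simp add: norm_mult)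
    also have "\<dots> \<le> L2_set (\<lambda>j. norm (B $ i $ j)) UNIV * L2_set (\<lambda>j. norm (w $ j)) UNIV"
      using L2_set_mult_ineq[of "\<lambda>j. norm (B $ i $ j)" "\<lambda>j. norm (w $ j)" UNIV]
      by (simp only: abs_norm_cancel)
    finally show ?thesis by (simp only: norm_vec_def)
  qed
  then have "norm (B *v w) \<le> L2_set (\<lambda>i. norm (B $ i) * norm w) UNIV"
    unfolding norm_vec_def[of "B *v w"] by (intro L2_set_mono) auto
  also have "\<dots> = norm B * norm w"
    using L2_set_right_distrib[of "norm w" "\<lambda>i. norm (B $ i)" UNIV]
    by (simp add: norm_vec_def[of B] mult.commute)
  finally show ?thesis .
qed

lemma norm_adjoint_mat: "norm (adjoint_mat (B::complex^'n^'m)) = norm B"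
proof -
  have "norm (adjoint_mat B) ^ 2 = norm B ^ 2"
    unfolding norm_vec_def L2_set_def adjoint_mat_def
    by (simp add: sum_nonneg complex_mod_cnj) (rule sum.swap)
  then show ?thesis by (simp add: power2_eq_iff_nonneg)
qed

lemma norm_adjoint_mat_mult_le: "norm (adjoint_mat (K::complex^'n^'m) *v w) \<le> norm K * norm w"
  using norm_matrix_vector_mult_le[of "adjoint_mat K" w] by (simp add: norm_adjoint_mat)

lemma adjoint_mat_mult: "adjoint_mat (A ** B) = adjoint_mat B ** adjoint_mat (A :: complex^'n^'m)"
  by (simp add: adjoint_mat_def matrix_matrix_mult_def vec_eq_iff mult.commute)

lemma integral_pair_matrix_vector_mult:
  fixes B :: "'a \<Rightarrow> complex^'n^'m" and u :: "'b \<Rightarrow> complex^'n"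
  assumes "pair_sigma_finite M N" "integrable M B" "integrable N u"
  shows "integrable (M \<Otimes>\<^sub>M N) (\<lambda>(a, b). B a *v u b)"
    and "(\<integral>(a, b). B a *v u b \<partial>(M \<Otimes>\<^sub>M N)) = integral\<^sup>L M B *v integral\<^sup>L N u"
proof -
  have [measurable]: "B \<in> borel_measurable M" "u \<in> borel_measurable N" using assms by auto
  show int: "integrable (M \<Otimes>\<^sub>M N) (\<lambda>(a, b). B a *v u b)"
    by (rule integrable_pair_measure_dominated[OF assms(1) integrable_norm[OF assms(2)]
          integrable_norm[OF assms(3)]]) (measurable, simp add: norm_matrix_vector_mult_le)
  have "(\<integral>(a, b). B a *v u b \<partial>(M \<Otimes>\<^sub>M N)) = (\<integral>a. B a *v integral\<^sup>L N u \<partial>M)"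
    by (rule integral_pair_measure_bounded_linear[OF assms(1) int _ assms(3)]) simp
  also have "\<dots> = integral\<^sup>L M B *v integral\<^sup>L N u"
    by (rule integral_bounded_linear[OF bounded_linear_matrix_vector_mult_left assms(2)])
  finally show "(\<integral>(a, b). B a *v u b \<partial>(M \<Otimes>\<^sub>M N)) = integral\<^sup>L M B *v integral\<^sup>L N u" .
qed

lemma weighted_residual_split:
  fixes A :: "complex^'n^'n" and M' :: "complex^'n^'m" and W :: "complex^'m^'m"
  shows "adjoint_mat (M' ** A) *v (W *v ((M' ** A) *v z - (M' *v (A *v x) + e')))
    = (adjoint_mat (M' ** A) ** W ** (M' ** A)) *v (z - x) - (adjoint_mat (M' ** A) ** W) *v e'"
  by (simp add: matrix_vector_mul_assoc[symmetric] matrix_vector_mult_diff_distrib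
      matrix_vector_right_distrib)

definition diag_mat :: "('n \<Rightarrow> 'a::zero) \<Rightarrow> 'a^'n^'n" where
  "diag_mat d = (\<chi> i j. if i = j then d i else 0)"

lemma diag_mat_mult: "diag_mat a ** diag_mat b = diag_mat (\<lambda>i. a i * b i :: 'a::semiring_1)"
proof -
  have "(\<Sum>k\<in>UNIV. (if i = k then a i else 0) * (if k = j then b k else 0))
      = (if i = j then a i * b i else 0)" for i j
    by (subst sum.mono_neutral_right[of UNIV "{i}"]) auto
  then show ?thesis by (simp add: vec_eq_iff matrix_matrix_mult_def diag_mat_def)
qed

lemma transpose_diag_mat: "transpose (diag_mat d) = diag_mat d"
  by (simp add: vec_eq_iff transpose_def diag_mat_def)

lemma mat_1_eq_diag_mat: "mat 1 = diag_mat (\<lambda>_. 1)"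
  by (simp add: vec_eq_iff mat_def diag_mat_def)

lemma rank_lt_card_if_zero_row:
  fixes A :: "'a::field^'n^'m"
  assumes "row i A = 0"
  shows "rank A < CARD('m)"
proof -
  have rows: "rows A = (\<lambda>k. row k A) ` UNIV" by (auto simp: rows_def)
  have zero: "0 \<in> rows A" unfolding rows using assms by (metis rangeI)
  have "vec.dim (rows A) \<le> card (rows A - {0})"
  proof (rule vec.dim_le_card)
    show "rows A \<subseteq> vec.span (rows A - {0})"
    proof
      fix x assume "x \<in> rows A"
      then show "x \<in> vec.span (rows A - {0})"
        by (cases "x = 0") (auto intro: vec.span_zero vec.span_base)
    qed
  qed (simp add: rows)
  also have "\<dots> < card (rows A)"
    using zero by (intro psubset_card_mono) (auto simp: rows)
  also have "\<dots> \<le> CARD('m)"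
    unfolding rows by (rule card_image_le) simp
  finally show ?thesis by (simp add: row_rank_def_gen)
qed

section \<open>Sampling matrices and the weight matrix\<close>

lemma sampling_matrix_rows:
  assumes "sampling_matrix (M :: complex^'n^'m)"
  obtains j where "\<And>r. M $ r = axis (j r) 1" "inj j"
proof -
  obtain j where j: "\<And>r. M $ r = axis (j r) 1"
    using assms unfolding sampling_matrix_def by metis
  moreover have "inj j"
  proof (rule injI)
    fix r r' assume "j r = j r'"
    then have "M $ r = M $ r'" by (simp add: j)
    with assms show "r = r'" unfolding sampling_matrix_def by (simp add: inj_eq)
  qed
  ultimately show ?thesis using that by blast
qed

lemma finite_sampling_matrices: "finite {M :: complex^'n^'m. sampling_matrix M}"
proof (rule finite_subset)
  show "{M :: complex^'n^'m. sampling_matrix M} \<subseteq> range (\<lambda>j. \<chi> r. axis (j r) 1)"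
  proof
    fix M :: "complex^'n^'m" assume "M \<in> {M. sampling_matrix M}"
    then obtain j where "\<And>r. M $ r = axis (j r) 1" by (auto elim: sampling_matrix_rows)
    then have "M = (\<chi> r. axis (j r) 1)" by (simp add: vec_eq_iff)
    then show "M \<in> range (\<lambda>j. \<chi> r. axis (j r) 1)" by blast
  qed
qed simp

lemma sampling_matrix_adjoint:
  assumes "sampling_matrix M"
  shows "adjoint_mat M = transpose M"
proof -
  obtain j where "\<And>r. M $ r = axis (j r) 1" using sampling_matrix_rows[OF assms] by blast
  then show ?thesis by (simp add: vec_eq_iff adjoint_mat_def transpose_def axis_def)
qed

lemma sampling_matrix_gram:
  assumes "sampling_matrix (M :: complex^'n^'m)"
  obtains s where "transpose M ** M = diag_mat s" "\<And>a. s a \<in> {0, 1}"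
proof -
  obtain j where j: "\<And>r. M $ r = axis (j r) 1" and "inj j"
    using sampling_matrix_rows[OF assms] by blast
  have "(transpose M ** M) $ a $ b = (if a = b \<and> a \<in> range j then 1 else 0)" for a b
  proof -
    have "(transpose M ** M) $ a $ b = (\<Sum>r\<in>UNIV. M $ r $ a * M $ r $ b)"
      by (simp add: matrix_matrix_mult_def transpose_def)
    also have "\<dots> = (\<Sum>r\<in>UNIV. if a = b \<and> a = j r then 1 else 0)"
      by (rule sum.cong) (auto simp: j axis_def)
    also have "\<dots> = (if a = b \<and> a \<in> range j then 1 else 0)"
    proof (cases "a = b \<and> a \<in> range j")
      case True
      then obtain r0 where "a = b" "a = j r0" by blast
      with \<open>inj j\<close> have "(\<Sum>r\<in>UNIV. if a = b \<and> a = j r then 1 else 0)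
          = (\<Sum>r\<in>UNIV. if r = r0 then 1 else (0::complex))"
        by (intro sum.cong) (auto simp: inj_eq)
      with True show ?thesis by auto
    qed (auto intro!: sum.neutral)
    finally show ?thesis .
  qed
  then have "transpose M ** M = diag_mat (\<lambda>a. if a \<in> range j then 1 else 0)"
    by (simp add: vec_eq_iff diag_mat_def)
  with that show ?thesis by simp
qed

lemma sampling_matrix_gram_entries:
  assumes "sampling_matrix (M :: complex^'n^'m)"
  shows "(transpose M ** M) $ a $ b = (if a = b then complex_of_real (Re ((transpose M ** M) $ a $ a)) else 0)"
    and "0 \<le> Re ((transpose M ** M) $ a $ a)"
proof -
  obtain s where D: "transpose M ** M = diag_mat s" and s: "\<And>a. s a \<in> {0, 1}"
    using sampling_matrix_gram[OF assms] by blast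
  show "(transpose M ** M) $ a $ b = (if a = b then complex_of_real (Re ((transpose M ** M) $ a $ a)) else 0)"
    "0 \<le> Re ((transpose M ** M) $ a $ a)"
    using D s[of a] by (auto simp: diag_mat_def)
qed

lemma Wbar_eq_diag_mat:
  "Wbar pM = diag_mat (\<lambda>i. if mean_MtM pM $ i $ i = 0 then 0
     else complex_of_real (Re (mean_MtM pM $ i $ i) powr (-1/2)))"
  by (simp add: Wbar_def diag_mat_def vec_eq_iff)

lemma mean_MtM_eq_diag_mat:
  fixes pM :: "(complex^'n^'m) measure"
  assumes "prob_space pM" "sets pM = sets borel" "AE M in pM. sampling_matrix M"
    and "rank (mean_MtM pM) = CARD('n)"
  obtains r where "\<And>a. r a > 0" "mean_MtM pM = diag_mat (\<lambda>a. complex_of_real (r a))"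
proof -
  interpret prob_space pM by fact
  have [measurable]: "(\<lambda>M. M) \<in> borel_measurable pM" by (rule measurable_ident_sets[OF assms(2)])
  have int: "integrable pM (\<lambda>M::complex^'n^'m. transpose M ** M)"
    by (rule integrable_AE_in_finite_set[OF finite_sampling_matrices]) (use assms(3) in auto)
  define r where "r a = (\<integral>M. Re ((transpose M ** M) $ a $ a) \<partial>pM)" for a
  have gram: "AE M in pM. (transpose M ** M) $ a $ b
      = (if a = b then complex_of_real (Re ((transpose M ** M) $ a $ a)) else 0)
      \<and> 0 \<le> Re ((transpose M ** M) $ a $ a)" for a b
    using assms(3) by eventually_elim (blast intro: sampling_matrix_gram_entries)
  have "mean_MtM pM $ a $ b = (\<integral>M. (transpose M ** M) $ a $ b \<partial>pM)" for a b
    unfolding mean_MtM_def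
    by (rule integral_bounded_linear[symmetric, OF _ int])
       (intro bounded_linear_compose[OF bounded_linear_vec_nth bounded_linear_vec_nth])
  also have "\<dots> a b = (if a = b then complex_of_real (r a) else 0)" for a b
    unfolding r_def
    by (subst integral_cong_AE[where g="\<lambda>M. if a = b then complex_of_real (Re ((transpose M ** M) $ a $ a)) else 0"])
       (use gram[of a b] in \<open>auto elim: eventually_mono\<close>)
  finally have mean: "mean_MtM pM = diag_mat (\<lambda>a. complex_of_real (r a))"
    by (simp add: vec_eq_iff diag_mat_def)
  have "r a > 0" for a
  proof -
    have "r a \<ge> 0"
      unfolding r_def by (rule integral_nonneg_AE) (use gram[of a a] in \<open>auto elim: eventually_mono\<close>)
    moreover have "r a \<noteq> 0"
    proof
      assume "r a = 0"
      then have "row a (mean_MtM pM) = 0" by (simp add: mean row_def diag_mat_def vec_eq_iff)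
      with assms(4) show False using rank_lt_card_if_zero_row by fastforce
    qed
    ultimately show ?thesis by simp
  qed
  with mean that show ?thesis by blast
qed

lemma mean_MtM_mult_Wbar_square:
  fixes pM :: "(complex^'n^'m) measure"
  assumes "prob_space pM" "sets pM = sets borel" "AE M in pM. sampling_matrix M"
    and "rank (mean_MtM pM) = CARD('n)"
  shows "mean_MtM pM ** (Wbar pM ** transpose (Wbar pM)) = mat 1"
proof -
  obtain r where r: "\<And>a. r a > 0" and mean: "mean_MtM pM = diag_mat (\<lambda>a. complex_of_real (r a))"
    using mean_MtM_eq_diag_mat[OF assms] by blast
  have "Wbar pM = diag_mat (\<lambda>a. complex_of_real (r a powr (-1/2)))"
    using r by (simp add: Wbar_eq_diag_mat mean diag_mat_def less_le)
  moreover have "r a * (r a powr (-1/2) * r a powr (-1/2)) = 1" for a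
    using r[of a] by (simp add: powr_add[symmetric] powr_neg_one)
  ultimately show ?thesis
    by (simp add: mean transpose_diag_mat diag_mat_mult mat_1_eq_diag_mat flip: of_real_mult)
qed

lemma sampling_weighted_gram:
  assumes "sampling_matrix M'"
  shows "adjoint_mat (M' ** A) ** Wmat pM M' ** (M' ** A)
    = adjoint_mat A ** ((transpose M' ** M') ** (Wbar pM ** transpose (Wbar pM))) ** A"
proof -
  obtain s where D: "transpose M' ** M' = diag_mat s" and s: "\<And>a. s a \<in> {0, 1}"
    using sampling_matrix_gram[OF assms] by blast
  let ?W2 = "Wbar pM ** transpose (Wbar pM)"
  have "adjoint_mat (M' ** A) ** Wmat pM M' ** (M' ** A)
      = adjoint_mat A ** (((transpose M' ** M') ** ?W2) ** (transpose M' ** M')) ** A"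
    by (simp add: Wmat_def adjoint_mat_mult sampling_matrix_adjoint[OF assms]
        matrix_transpose_mul matrix_mul_assoc)
  also have "((transpose M' ** M') ** ?W2) ** (transpose M' ** M') = (transpose M' ** M') ** ?W2"
    unfolding D Wbar_eq_diag_mat transpose_diag_mat diag_mat_mult
    using s by (intro arg_cong[where f=diag_mat] ext) auto
  finally show ?thesis .
qed

lemma mean_sampling_weighted_gram:
  fixes A :: "complex^'n^'n" and pM :: "(complex^'n^'m) measure"
  assumes "adjoint_mat A ** A = mat 1"
    and "prob_space pM" "sets pM = sets borel" "AE M in pM. sampling_matrix M"
    and "rank (mean_MtM pM) = CARD('n)"
  shows "(\<integral>M'. adjoint_mat (M' ** A) ** Wmat pM M' ** (M' ** A) \<partial>pM) = mat 1"
proof -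
  interpret prob_space pM by fact
  have [measurable]: "(\<lambda>M. M) \<in> borel_measurable pM" by (rule measurable_ident_sets[OF assms(3)])
  let ?W2 = "Wbar pM ** transpose (Wbar pM)"
  have int: "integrable pM (\<lambda>M::complex^'n^'m. transpose M ** M)"
    by (rule integrable_AE_in_finite_set[OF finite_sampling_matrices]) (use assms(4) in auto)
  have "(\<integral>M'. adjoint_mat (M' ** A) ** Wmat pM M' ** (M' ** A) \<partial>pM)
      = (\<integral>M'. adjoint_mat A ** ((transpose M' ** M') ** ?W2) ** A \<partial>pM)"
  proof (rule integral_cong_AE)
    show "AE M' in pM. adjoint_mat (M' ** A) ** Wmat pM M' ** (M' ** A)
        = adjoint_mat A ** ((transpose M' ** M') ** ?W2) ** A"
      using assms(4) by eventually_elim (rule sampling_weighted_gram)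
  qed (simp_all add: Wmat_def)
  also have "\<dots> = adjoint_mat A ** (mean_MtM pM ** ?W2) ** A"
    unfolding mean_MtM_def
    by (rule integral_bounded_linear[OF _ int])
       (intro bounded_linear_compose[OF bounded_linear_matrix_mult_left]
          bounded_linear_compose[OF bounded_linear_matrix_mult_right] bounded_linear_matrix_mult_left)
  also have "\<dots> = mat 1"
    by (simp add: mean_MtM_mult_Wbar_square[OF assms(2-5)] assms(1))
  finally show ?thesis .
qed

section \<open>Centered Gaussian noise\<close>

definition centered_law :: "'a::{banach, second_countable_topology} measure \<Rightarrow> bool" where
  "centered_law N \<longleftrightarrow> prob_space N \<and> sets N = sets borel \<and> integrable N (\<lambda>z. z) \<and> (\<integral>z. z \<partial>N) = 0"

lemma centered_law_normal_density:
  assumes "0 < s"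
  shows "centered_law (density lborel (normal_density 0 s))"
  unfolding centered_law_def
proof (intro conjI)
  show "prob_space (density lborel (normal_density 0 s))"
    by (rule prob_space_normal_density[OF assms])
  show "integrable (density lborel (normal_density 0 s)) (\<lambda>x. x)"
    by (subst integrable_density) (auto simp: integrable_normal_moment_nz_1[OF assms])
  show "(\<integral>x. x \<partial>density lborel (normal_density 0 s)) = 0"
    by (subst integral_density)
       (auto intro: has_bochner_integral_integral_eq normal_moment_nz_1[OF assms, of 0])
qed simp

lemma centered_law_Complex:
  fixes M N :: "real measure"
  assumes "centered_law M" "centered_law N"
  shows "centered_law (distr (M \<Otimes>\<^sub>M N) borel (\<lambda>(a, b). Complex a b))"
proof -
  have M: "prob_space M" "integrable M (\<lambda>a. a)" "(\<integral>a. a \<partial>M) = 0"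
    and N: "prob_space N" "integrable N (\<lambda>b. b)" "(\<integral>b. b \<partial>N) = 0"
    using assms by (simp_all add: centered_law_def)
  have [measurable]: "(\<lambda>a. a) \<in> borel_measurable M" "(\<lambda>b. b) \<in> borel_measurable N"
    using assms by (auto simp: centered_law_def intro: measurable_ident_sets)
  have [measurable]: "(\<lambda>(a, b). Complex a b) \<in> borel_measurable (M \<Otimes>\<^sub>M N)"
  proof -
    have "(\<lambda>p. complex_of_real (fst p) + \<i> * complex_of_real (snd p)) \<in> borel_measurable (M \<Otimes>\<^sub>M N)"
      by measurable
    then show ?thesis by (simp add: split_beta' Complex_eq)
  qed
  have re: "integrable (M \<Otimes>\<^sub>M N) (\<lambda>p. complex_of_real (fst p))"
    "(\<integral>p. complex_of_real (fst p) \<partial>(M \<Otimes>\<^sub>M N)) = 0"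
    using integrable_pair_measure_fst[OF N(1) M(2)] integral_pair_measure_fst[OF N(1) M(2)] M(3)
    by simp_all
  have im: "integrable (M \<Otimes>\<^sub>M N) (\<lambda>p. \<i> * complex_of_real (snd p))"
    "(\<integral>p. \<i> * complex_of_real (snd p) \<partial>(M \<Otimes>\<^sub>M N)) = 0"
    using integrable_pair_measure_snd[OF M(1) N(1) N(2)] integral_pair_measure_snd[OF M(1) N(1) N(2)] N(3)
    by simp_all
  have "(\<lambda>(a, b). Complex a b) = (\<lambda>p. complex_of_real (fst p) + \<i> * complex_of_real (snd p))"
    by (auto simp: fun_eq_iff Complex_eq)
  moreover have "integrable (M \<Otimes>\<^sub>M N) (\<lambda>p. complex_of_real (fst p) + \<i> * complex_of_real (snd p))"
    by (rule Bochner_Integration.integrable_add[OF re(1) im(1)])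
  moreover have "(\<integral>p. complex_of_real (fst p) + \<i> * complex_of_real (snd p) \<partial>(M \<Otimes>\<^sub>M N)) = 0"
    by (simp only: Bochner_Integration.integral_add[OF re(1) im(1)] re(2) im(2)) simp
  ultimately have "integrable (M \<Otimes>\<^sub>M N) (\<lambda>(a, b). Complex a b)"
    "(\<integral>(a, b). Complex a b \<partial>(M \<Otimes>\<^sub>M N)) = 0"
    by simp_all
  then show ?thesis
    unfolding centered_law_def
    by (simp add: prob_space.prob_space_distr prob_space_pair M(1) N(1) integrable_distr_eq integral_distr)
qed

lemma norm_axis: "norm (axis i x :: 'a::real_normed_vector^'n) = norm x"
proof -
  have "(norm (axis i x $ j))\<^sup>2 = (if j = i then (norm x)\<^sup>2 else 0)" for j
    by (simp add: axis_def)
  then show ?thesis by (simp add: norm_vec_def L2_set_def)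
qed

lemma bounded_linear_axis: "bounded_linear (axis i :: 'a::real_normed_vector \<Rightarrow> 'a^'n)"
proof (rule bounded_linear_intro[where K=1])
  show "norm (axis i x) \<le> norm x * 1" for x :: 'a by (simp add: norm_axis)
qed (simp_all add: vec_eq_iff axis_def)

lemma centered_law_vec:
  fixes N :: "'a::euclidean_space measure"
  assumes "centered_law N"
  shows "centered_law (distr (PiM UNIV (\<lambda>_::'n::finite. N)) borel (\<lambda>f. \<chi> i. f i))"
proof -
  let ?P = "PiM UNIV (\<lambda>_::'n. N)"
  have N: "prob_space N" "integrable N (\<lambda>z. z)" "(\<integral>z. z \<partial>N) = 0"
    using assms by (simp_all add: centered_law_def)
  have [measurable]: "(\<lambda>z. z) \<in> borel_measurable N"
    using assms by (auto simp: centered_law_def intro: measurable_ident_sets)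
  have P: "prob_space ?P" by (rule prob_space_PiM) (rule N(1))
  have vec_sum: "(\<chi> i. f i) = (\<Sum>i\<in>UNIV. axis i (f i))" for f :: "'n \<Rightarrow> 'a"
    by (simp add: vec_eq_iff axis_def)
  have [measurable]: "axis i \<in> borel_measurable (borel :: 'a measure)" for i :: 'n
    by (intro borel_measurable_continuous_onI linear_continuous_on bounded_linear_axis)
  have [measurable]: "(\<lambda>f. \<chi> i. f i) \<in> borel_measurable ?P"
    unfolding vec_sum by measurable
  have coord: "integrable ?P (\<lambda>f. f i)" "(\<integral>f. f i \<partial>?P) = 0" for i :: 'n
  proof -
    have "distr ?P N (\<lambda>f. f i) = N"
      by (rule distr_PiM_component) (auto intro: N(1))
    moreover have c: "(\<lambda>f. f i) \<in> ?P \<rightarrow>\<^sub>M N" by simp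
    ultimately have "integrable (distr ?P N (\<lambda>f. f i)) (\<lambda>z. z)"
      "integral\<^sup>L (distr ?P N (\<lambda>f. f i)) (\<lambda>z. z) = 0"
      using N(2,3) by simp_all
    then show "integrable ?P (\<lambda>f. f i)" "(\<integral>f. f i \<partial>?P) = 0"
      by (simp_all add: integrable_distr_eq[OF c] integral_distr[OF c])
  qed
  have axis_coord: "integrable ?P (\<lambda>f. axis i (f i))" for i :: 'n
    by (rule integrable_bounded_linear[OF bounded_linear_axis coord(1)])
  have "integrable ?P (\<lambda>f. \<chi> i. f i)"
    unfolding vec_sum by (intro Bochner_Integration.integrable_sum axis_coord)
  moreover have "(\<integral>f. (\<chi> i. f i) \<partial>?P) = (\<Sum>i\<in>UNIV. \<integral>f. axis i (f i) \<partial>?P)"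
    unfolding vec_sum by (intro Bochner_Integration.integral_sum axis_coord)
  moreover have "(\<integral>f. axis i (f i) \<partial>?P) = 0" for i :: 'n
    using integral_bounded_linear[OF bounded_linear_axis coord(1)] coord(2)
    by (simp add: vec_eq_iff axis_def)
  ultimately show ?thesis
    unfolding centered_law_def
    by (simp add: prob_space.prob_space_distr P integrable_distr_eq integral_distr)
qed

lemma centered_law_cgauss_vec: "0 < \<sigma> \<Longrightarrow> centered_law (cgauss_vec \<sigma>)"
  unfolding cgauss_vec_def cgauss_def
  by (intro centered_law_vec centered_law_Complex centered_law_normal_density) simp_all

section \<open>Averaging over the fresh measurement\<close>

lemma integral_independent_unbiased_estimate:
  fixes K :: "'a \<Rightarrow> complex^'p^'n" and v :: "'a \<Rightarrow> complex^'n"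
    and G :: "'b \<Rightarrow> complex^'n^'n" and g :: "'b \<Rightarrow> complex^'n"
  assumes "prob_space M" "prob_space N"
    and [measurable]: "K \<in> borel_measurable M" "v \<in> borel_measurable M"
    and K: "integrable M (\<lambda>a. norm (K a))" and Kv: "integrable M (\<lambda>a. norm (K a) * norm (v a))"
    and G: "integrable N G" "integral\<^sup>L N G = mat 1"
    and g: "integrable N g" "integral\<^sup>L N g = 0"
  shows "(\<integral>(a, b). adjoint_mat (K a) *v (G b *v v a - g b) \<partial>(M \<Otimes>\<^sub>M N))
    = (\<integral>a. adjoint_mat (K a) *v v a \<partial>M)"
proof -
  have MN: "pair_sigma_finite M N"
    by (simp add: pair_sigma_finite_def prob_space_imp_sigma_finite assms)
  have [measurable]: "G \<in> borel_measurable N" "g \<in> borel_measurable N" using G g by auto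
  have bound: "norm (adjoint_mat (K a) *v (G b *v v a)) \<le> norm (K a) * norm (v a) * norm (G b)" for a b
    using order_trans[OF norm_adjoint_mat_mult_le mult_left_mono[OF norm_matrix_vector_mult_le]]
    by (simp add: mult_ac)
  have int_G: "integrable (M \<Otimes>\<^sub>M N) (\<lambda>(a, b). adjoint_mat (K a) *v (G b *v v a))"
    by (rule integrable_pair_measure_dominated[OF MN Kv integrable_norm[OF G(1)]])
       (measurable, simp add: bound)
  have int_g: "integrable (M \<Otimes>\<^sub>M N) (\<lambda>(a, b). adjoint_mat (K a) *v g b)"
    by (rule integrable_pair_measure_dominated[OF MN K integrable_norm[OF g(1)]])
       (measurable, simp add: norm_adjoint_mat_mult_le)
  have "(\<integral>(a, b). adjoint_mat (K a) *v (G b *v v a - g b) \<partial>(M \<Otimes>\<^sub>M N))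
      = (\<integral>(a, b). adjoint_mat (K a) *v (G b *v v a) \<partial>(M \<Otimes>\<^sub>M N))
        - (\<integral>(a, b). adjoint_mat (K a) *v g b \<partial>(M \<Otimes>\<^sub>M N))"
    using Bochner_Integration.integral_diff[OF int_G int_g]
    by (simp add: split_beta' matrix_vector_mult_diff_distrib)
  also have "(\<integral>(a, b). adjoint_mat (K a) *v (G b *v v a) \<partial>(M \<Otimes>\<^sub>M N))
      = (\<integral>a. adjoint_mat (K a) *v (integral\<^sup>L N G *v v a) \<partial>M)"
    by (rule integral_pair_measure_bounded_linear[where T="\<lambda>a Z. adjoint_mat (K a) *v (Z *v v a)",
          OF MN int_G _ G(1)])
       (intro bounded_linear_compose[OF matrix_vector_mul_bounded_linear
          bounded_linear_matrix_vector_mult_left])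
  also have "(\<integral>(a, b). adjoint_mat (K a) *v g b \<partial>(M \<Otimes>\<^sub>M N))
      = (\<integral>a. adjoint_mat (K a) *v integral\<^sup>L N g \<partial>M)"
    by (rule integral_pair_measure_bounded_linear[OF MN int_g _ g(1)]) simp
  finally show ?thesis by (simp add: G(2) g(2))
qed

lemma integral_fresh_measurement:
  fixes K :: "'a \<Rightarrow> complex^'p^'n" and v :: "'a \<Rightarrow> complex^'n"
    and A :: "complex^'n^'n" and pM :: "(complex^'n^'m) measure" and R :: "(complex^'m) measure"
  assumes A_orth: "adjoint_mat A ** A = mat 1"
    and pM_prob: "prob_space pM" and pM_sets: "sets pM = sets borel"
    and pM_sampling: "AE M in pM. sampling_matrix M"
    and full_rank: "rank (mean_MtM pM) = CARD('n)"
    and noise: "centered_law R" and \<Omega>: "prob_space \<Omega>"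
    and meas[measurable]: "K \<in> borel_measurable \<Omega>" "v \<in> borel_measurable \<Omega>"
    and int_K: "integrable \<Omega> (\<lambda>a. norm (K a))" "integrable \<Omega> (\<lambda>a. norm (K a) * norm (v a))"
  shows "(\<integral>(a, M', e'). adjoint_mat (K a) *v ((adjoint_mat (M' ** A) ** Wmat pM M' ** (M' ** A)) *v v a
            - (adjoint_mat (M' ** A) ** Wmat pM M') *v e') \<partial>(\<Omega> \<Otimes>\<^sub>M (pM \<Otimes>\<^sub>M R)))
    = (\<integral>a. adjoint_mat (K a) *v v a \<partial>\<Omega>)" (is "?lhs = _")
proof -
  interpret pM: prob_space pM by fact
  have R: "prob_space R" "integrable R (\<lambda>e. e)" "integral\<^sup>L R (\<lambda>e. e) = 0"
    using noise by (simp_all add: centered_law_def)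
  have [measurable]: "(\<lambda>M. M) \<in> borel_measurable pM" by (rule measurable_ident_sets[OF pM_sets])
  define G where "G M' = adjoint_mat (M' ** A) ** Wmat pM M' ** (M' ** A)" for M'
  define H where "H M' = adjoint_mat (M' ** A) ** Wmat pM M'" for M'
  have sampled: "AE M in pM. M \<in> {M. sampling_matrix M}" using pM_sampling by simp
  have G_int: "integrable pM G"
    by (rule pM.integrable_AE_in_finite_set[OF finite_sampling_matrices sampled])
       (unfold G_def Wmat_def, measurable)
  have H_int: "integrable pM H"
    by (rule pM.integrable_AE_in_finite_set[OF finite_sampling_matrices sampled])
       (unfold H_def Wmat_def, measurable)
  have G_mean: "integral\<^sup>L pM G = mat 1"
    unfolding G_def[abs_def]
    by (rule mean_sampling_weighted_gram[OF A_orth pM_prob pM_sets pM_sampling full_rank])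
  have G2: "integrable (pM \<Otimes>\<^sub>M R) (\<lambda>b. G (fst b))" "(\<integral>b. G (fst b) \<partial>(pM \<Otimes>\<^sub>M R)) = mat 1"
    using integral_pair_measure_fst[OF R(1) G_int] G_mean
    by (simp_all add: integrable_pair_measure_fst[OF R(1) G_int])
  have "pair_sigma_finite pM R"
    by (simp add: pair_sigma_finite_def prob_space_imp_sigma_finite R(1) pM_prob)
  from integral_pair_matrix_vector_mult[OF this H_int R(2)]
  have H2: "integrable (pM \<Otimes>\<^sub>M R) (\<lambda>b. H (fst b) *v snd b)"
    "(\<integral>b. H (fst b) *v snd b \<partial>(pM \<Otimes>\<^sub>M R)) = 0"
    by (simp_all add: split_beta' R(3))
  have "?lhs = (\<integral>(a, b). adjoint_mat (K a) *v (G (fst b) *v v a - H (fst b) *v snd b) \<partial>(\<Omega> \<Otimes>\<^sub>M (pM \<Otimes>\<^sub>M R)))"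
    by (rule Bochner_Integration.integral_cong[OF refl]) (clarsimp simp: G_def H_def)
  also have "\<dots> = (\<integral>a. adjoint_mat (K a) *v v a \<partial>\<Omega>)"
    by (rule integral_independent_unbiased_estimate[OF \<Omega> prob_space_pair[OF pM_prob R(1)] meas int_K G2 H2])
  finally show ?thesis .
qed

lemma integral_weighted_residual_eq_residual:
  fixes A :: "complex^'n^'n" and px :: "(complex^'n) measure" and pM :: "(complex^'n^'m) measure"
    and J :: "complex^'m \<Rightarrow> complex^'p^'n" and xbar :: "complex^'m \<Rightarrow> complex^'n"
  assumes A_orth: "adjoint_mat A ** A = mat 1"
    and pM_prob: "prob_space pM" and pM_sets: "sets pM = sets borel"
    and pM_sampling: "AE M in pM. sampling_matrix M"
    and full_rank: "rank (mean_MtM pM) = CARD('n)"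
    and px_prob: "prob_space px" and px_sets: "sets px = sets borel"
    and noise: "centered_law (R :: (complex^'m) measure)"
    and [measurable]: "J \<in> borel_measurable borel" "xbar \<in> borel_measurable borel"
    and int_J: "integrable (px \<Otimes>\<^sub>M pM \<Otimes>\<^sub>M R) (\<lambda>(x, M, e). norm (J (M *v (A *v x) + e)))"
    and int_J_err: "integrable (px \<Otimes>\<^sub>M pM \<Otimes>\<^sub>M R)
      (\<lambda>(x, M, e). norm (J (M *v (A *v x) + e)) * norm (xbar (M *v (A *v x) + e) - x))"
  shows "(\<integral>(x, M, M', e, e'). adjoint_mat (J (M *v (A *v x) + e))
            *v (adjoint_mat (M' ** A) *v (Wmat pM M'
              *v ((M' ** A) *v xbar (M *v (A *v x) + e) - (M' *v (A *v x) + e'))))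
          \<partial>(px \<Otimes>\<^sub>M pM \<Otimes>\<^sub>M pM \<Otimes>\<^sub>M R \<Otimes>\<^sub>M R))
    = (\<integral>(x, M, M', e, e'). adjoint_mat (J (M *v (A *v x) + e)) *v (xbar (M *v (A *v x) + e) - x)
          \<partial>(px \<Otimes>\<^sub>M pM \<Otimes>\<^sub>M pM \<Otimes>\<^sub>M R \<Otimes>\<^sub>M R))"
    (is "integral\<^sup>L ?\<Omega> ?lhs = integral\<^sup>L ?\<Omega> ?rhs")
proof -
  have R: "prob_space R" "sets R = sets borel" using noise by (simp_all add: centered_law_def)
  have [measurable]: "(\<lambda>x. x) \<in> borel_measurable px" "(\<lambda>M. M) \<in> borel_measurable pM"
    "(\<lambda>e. e) \<in> borel_measurable R"
    using px_sets pM_sets R(2) by (auto intro: measurable_ident_sets)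
  have sf: "sigma_finite_measure px" "sigma_finite_measure pM" "sigma_finite_measure R"
    using px_prob pM_prob R(1) by (simp_all add: prob_space_imp_sigma_finite)
  let ?\<Omega>1 = "px \<Otimes>\<^sub>M (pM \<Otimes>\<^sub>M R)" and ?\<Omega>2 = "pM \<Otimes>\<^sub>M R"
  define K where "K = (\<lambda>(x, M, e). J (M *v (A *v x) + e))"
  define v where "v = (\<lambda>(x, M, e). xbar (M *v (A *v x) + e) - x)"
  have K_meas[measurable]: "K \<in> borel_measurable ?\<Omega>1" unfolding K_def by measurable
  have v_meas[measurable]: "v \<in> borel_measurable ?\<Omega>1" unfolding v_def by measurable
  have int_K: "integrable ?\<Omega>1 (\<lambda>a. norm (K a))" "integrable ?\<Omega>1 (\<lambda>a. norm (K a) * norm (v a))"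
    using int_J int_J_err by (simp_all add: K_def v_def split_beta')
  have [measurable]: "?lhs \<in> borel_measurable ?\<Omega>" unfolding Wmat_def by measurable
  have [measurable]: "?rhs \<in> borel_measurable ?\<Omega>" by measurable
  have "integral\<^sup>L ?\<Omega> ?lhs = (\<integral>((x, M, e), (M', e')). ?lhs (x, M, M', e, e') \<partial>(?\<Omega>1 \<Otimes>\<^sub>M ?\<Omega>2))"
    by (rule integral_pair_measure_regroup[OF sf(1,2,2,3,3)]) measurable
  also have "\<dots> = (\<integral>(a, M', e'). adjoint_mat (K a) *v ((adjoint_mat (M' ** A) ** Wmat pM M' ** (M' ** A)) *v v a
            - (adjoint_mat (M' ** A) ** Wmat pM M') *v e') \<partial>(?\<Omega>1 \<Otimes>\<^sub>M ?\<Omega>2))"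
    by (rule Bochner_Integration.integral_cong[OF refl]) (clarsimp simp: K_def v_def weighted_residual_split)
  also have "\<dots> = (\<integral>a. adjoint_mat (K a) *v v a \<partial>?\<Omega>1)"
    by (rule integral_fresh_measurement[OF A_orth pM_prob pM_sets pM_sampling full_rank noise
          prob_space_pair[OF px_prob prob_space_pair[OF pM_prob R(1)]] K_meas v_meas int_K])
  also have "\<dots> = (\<integral>((x, M, e), (M', e')). ?rhs (x, M, M', e, e') \<partial>(?\<Omega>1 \<Otimes>\<^sub>M ?\<Omega>2))"
  proof -
    have "integrable ?\<Omega>1 (\<lambda>a. adjoint_mat (K a) *v v a)"
      by (rule Bochner_Integration.integrable_bound[OF int_K(2)]) (simp_all add: norm_adjoint_mat_mult_le)
    from integral_pair_measure_fst[OF prob_space_pair[OF pM_prob R(1)] this] show ?thesis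
      by (simp add: K_def v_def split_beta')
  qed
  also have "\<dots> = integral\<^sup>L ?\<Omega> ?rhs"
    by (rule integral_pair_measure_regroup[symmetric, OF sf(1,2,2,3,3)]) measurable
  finally show ?thesis .
qed

theorem theorem1:
  fixes A :: "complex^'n^'n"
    and px :: "(complex^'n) measure"
    and pM :: "(complex^'n^'m) measure"
    and \<sigma> :: real
    and T :: "real^'p \<Rightarrow> complex^'n \<Rightarrow> complex^'m \<Rightarrow> complex^'n"
    and \<theta> :: "real^'p"
    and xbar :: "complex^'m \<Rightarrow> complex^'n"
    and DT :: "complex^'n \<Rightarrow> complex^'m \<Rightarrow> real^'p \<Rightarrow> complex^'n"
  assumes A_orth: "adjoint_mat A ** A = mat 1"
    and pM_prob: "prob_space pM" and pM_sets: "sets pM = sets borel"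
    and pM_sampling: "AE M in pM. sampling_matrix M"
    and full_rank: "rank (mean_MtM pM) = CARD('n)"
    and px_prob: "prob_space px" and px_sets: "sets px = sets borel"
    and sigma_pos: "\<sigma> > 0"
    and fixed_point: "\<And>y. T \<theta> (xbar y) y = xbar y"
    and deriv: "\<And>z y. ((\<lambda>t. T t z y) has_derivative DT z y) (at \<theta>)"
    and xbar_meas: "xbar \<in> borel_measurable borel"
    and jac_meas: "(\<lambda>y. jacobian_matrix (DT (xbar y) y)) \<in> borel_measurable borel"
    and int_jac: "integrable (px \<Otimes>\<^sub>M pM \<Otimes>\<^sub>M cgauss_vec \<sigma>)
        (\<lambda>(x, M, e). norm (jacobian_matrix (DT (xbar (M *v (A *v x) + e)) (M *v (A *v x) + e))))"
    and int_jac_err: "integrable (px \<Otimes>\<^sub>M pM \<Otimes>\<^sub>M cgauss_vec \<sigma>)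
        (\<lambda>(x, M, e). norm (jacobian_matrix (DT (xbar (M *v (A *v x) + e)) (M *v (A *v x) + e)))
                     * norm (xbar (M *v (A *v x) + e) - x))"
  shows "Re_vec (integral\<^sup>L (px \<Otimes>\<^sub>M pM \<Otimes>\<^sub>M pM \<Otimes>\<^sub>M cgauss_vec \<sigma> \<Otimes>\<^sub>M cgauss_vec \<sigma>)
            (\<lambda>(x, M, M', e, e').
               let y = M *v (A *v x) + e; y' = M' *v (A *v x) + e'; xb = xbar y
               in adjoint_mat (jacobian_matrix (DT xb y))
                    *v (adjoint_mat (M' ** A) *v (Wmat pM M' *v ((M' ** A) *v xb - y')))))
       = Re_vec (integral\<^sup>L (px \<Otimes>\<^sub>M pM \<Otimes>\<^sub>M pM \<Otimes>\<^sub>M cgauss_vec \<sigma> \<Otimes>\<^sub>M cgauss_vec \<sigma>)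
            (\<lambda>(x, M, M', e, e' :: complex^'m).
               let y = M *v (A *v x) + e; xb = xbar y
               in adjoint_mat (jacobian_matrix (DT xb y)) *v (xb - x)))"
proof -
  \<comment> \<open>\<open>fixed_point\<close> and \<open>deriv\<close> only give \<open>DT\<close> its meaning; the identity holds for any measurable
    Jacobian field.\<close>
  define J where "J = (\<lambda>y. jacobian_matrix (DT (xbar y) y))"
  have J_meas: "J \<in> borel_measurable borel" unfolding J_def by (rule jac_meas)
  have int_J: "integrable (px \<Otimes>\<^sub>M pM \<Otimes>\<^sub>M cgauss_vec \<sigma>) (\<lambda>(x, M, e). norm (J (M *v (A *v x) + e)))"
    using int_jac by (simp add: J_def)
  have int_J_err: "integrable (px \<Otimes>\<^sub>M pM \<Otimes>\<^sub>M cgauss_vec \<sigma>)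
      (\<lambda>(x, M, e). norm (J (M *v (A *v x) + e)) * norm (xbar (M *v (A *v x) + e) - x))"
    using int_jac_err by (simp add: J_def)
  note eq = integral_weighted_residual_eq_residual[where J=J, OF A_orth pM_prob pM_sets pM_sampling
      full_rank px_prob px_sets centered_law_cgauss_vec[OF sigma_pos] J_meas xbar_meas int_J int_J_err]
  show ?thesis using eq by (simp add: J_def Let_def)
qed

end
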